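(* Let $n\ge2$, $F_1,\dots,F_n:\mathbb{R}^d\to\mathbb{R}^d$ with each $F_i$ $L_i$-Lipschitz, $F=\frac1n\sum_iF_i$ $L$-Lipschitz, and $z_*$ with $F(z_* )=0$. Let $L_{max}=\max_iL_i$, $A=\frac2n\sum_iL_i^2$, $\sigma_*^2=\frac1n\sum_i\|F_i(z_* )\|^2$. Suppose the SEG-RR step sizes satisfy $\gamma_1\le\frac{1}{3\sqrt{2n(n-1)}L_{max}}$ and $\gamma_2\le\frac{1}{\sqrt{n(n-1)}L_{max}}$. Then for every epoch $k$ the SEG-RR iterates satisfy $$\mathbb{E}_k\Big[\frac1n\sum_{j=0}^{n-1}\|z_j^k-z_0^k\|^2\Big]\le\big[10n^2L^2+A(25+n)\big]\gamma_1^2\|z_0^k-z_*\|^2+2(n+25)\gamma_1^2\sigma_*^2.$$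
   Context: SEG-RR with step sizes $\gamma_1,\gamma_2>0$: for each epoch $k$, with current point $z_0^k$, draw a permutation $\pi^k$ of $\{1,\dots,n\}$ uniformly at random, independently of the past; for $i=0,\dots,n-1$ set $\bar z_i^k=z_i^k-\gamma_2F_{\pi_i^k}(z_i^k)$, $z_{i+1}^k=z_i^k-\gamma_1F_{\pi_i^k}(\bar z_i^k)$; then $z_0^{k+1}=z_n^k$. $\mathbb{E}_k$ denotes expectation over $\pi^k$ conditional on the history up to $z_0^k$. *)

theory Defs
  imports "HOL-Analysis.Analysis" "HOL-Combinatorics.Permutations"
begin

definition seg_step :: "(nat \<Rightarrow> 'a::real_normed_vector \<Rightarrow> 'a) \<Rightarrow> real \<Rightarrow> real \<Rightarrow> nat \<Rightarrow> 'a \<Rightarrow> 'a" where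
  "seg_step F \<gamma>1 \<gamma>2 i z = z - \<gamma>1 *\<^sub>R F i (z - \<gamma>2 *\<^sub>R F i z)"

fun seg_iter :: "(nat \<Rightarrow> 'a::real_normed_vector \<Rightarrow> 'a) \<Rightarrow> real \<Rightarrow> real \<Rightarrow> (nat \<Rightarrow> nat) \<Rightarrow> 'a \<Rightarrow> nat \<Rightarrow> 'a" where
  "seg_iter F \<gamma>1 \<gamma>2 \<pi> z0 0 = z0"
| "seg_iter F \<gamma>1 \<gamma>2 \<pi> z0 (Suc j) = seg_step F \<gamma>1 \<gamma>2 (\<pi> j) (seg_iter F \<gamma>1 \<gamma>2 \<pi> z0 j)"

end

theory Submission
  imports Defs
begin

text \<open>Write \<open>a\<^sub>i = F\<^sub>i(z\<^sub>0)\<close>. For a fixed permutation \<open>\<pi>\<close>, the displacement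
  \<open>z\<^sub>j - z\<^sub>0\<close> is \<open>-\<gamma>\<^sub>1\<close> times the prefix sum of the \<open>a\<^bsub>\<pi>(t)\<^esub>\<close> over \<open>t < j\<close>, up to Lipschitz errors that are controlled by the
  displacements themselves. The step-size conditions let these errors be absorbed, so that the
  sum over \<open>j\<close> of the squared displacements is at most \<open>3\<gamma>\<^sub>1\<^sup>2\<close> times the sum of the squared prefix
  sums plus \<open>V = \<Sum>\<^sub>i \<parallel>a\<^sub>i\<parallel>\<^sup>2\<close>. Averaging over \<open>\<pi>\<close> is sampling without replacement: the
  \<open>j\<close>-th prefix sum has second moment \<open>(j/n) V + j(j-1)/(n(n-1)) (A - V)\<close>, where
  \<open>A = \<parallel>\<Sum>\<^sub>i a\<^sub>i\<parallel>\<^sup>2\<close>. Finally the Lipschitz constants bound \<open>V\<close> and \<open>A\<close> by \<open>\<parallel>z\<^sub>0 - z\<^sub>*\<parallel>\<^sup>2\<close> and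
  \<open>\<sigma>\<^sub>*\<^sup>2\<close>; the root \<open>z\<^sub>*\<close> makes \<open>A\<close> free of noise.\<close>

lemma sum_permutes_apply:
  fixes g :: "'b \<Rightarrow> 'c::{comm_semiring_1,semiring_char_0}"
  assumes "finite S" "t \<in> S"
  shows "(\<Sum>\<pi>\<in>{\<pi>. \<pi> permutes S}. g (\<pi> t)) = fact (card S - 1) * (\<Sum>b\<in>S. g b)"
proof -
  define S' where "S' = S - {t}"
  have S': "S = insert t S'" "t \<notin> S'" "finite S'" using assms by (auto simp: S'_def)
  have "(\<Sum>\<pi>\<in>{\<pi>. \<pi> permutes S}. g (\<pi> t)) =
     (\<Sum>b\<in>S. \<Sum>q\<in>{p. p permutes S'}. g ((Transposition.transpose t b \<circ> q) t))"
    using sum_over_permutations_insert[OF S'(3,2), of "\<lambda>\<pi>. g (\<pi> t)"] S'(1) by simp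
  also have "\<dots> = (\<Sum>b\<in>S. \<Sum>q\<in>{p. p permutes S'}. g b)"
    using S'(2) by (intro sum.cong refl) (simp add: permutes_not_in)
  also have "\<dots> = (\<Sum>b\<in>S. fact (card S') * g b)"
    using card_permutations[OF refl S'(3)] by simp
  also have "card S' = card S - 1" using assms by (simp add: S'_def)
  finally show ?thesis by (simp add: sum_distrib_left)
qed

lemma transpose_image_Diff_singleton:
  assumes "a \<in> S" "b \<in> S"
  shows "Transposition.transpose a b ` (S - {a}) = S - {b}"
  using assms by (auto simp: in_transpose_image_iff Transposition.transpose_def)

lemma sum_permutes_apply_pair:
  fixes h :: "'b \<Rightarrow> 'b \<Rightarrow> 'c::{comm_semiring_1,semiring_char_0}"
  assumes "finite S" "t \<in> S" "s \<in> S" "t \<noteq> s"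
  shows "(\<Sum>\<pi>\<in>{\<pi>. \<pi> permutes S}. h (\<pi> t) (\<pi> s))
    = fact (card S - 2) * (\<Sum>b\<in>S. \<Sum>c\<in>S - {b}. h b c)"
proof -
  define S' where "S' = S - {t}"
  have S': "S = insert t S'" "t \<notin> S'" "finite S'" "s \<in> S'" using assms by (auto simp: S'_def)
  let ?\<tau> = "Transposition.transpose t"
  have "(\<Sum>\<pi>\<in>{\<pi>. \<pi> permutes S}. h (\<pi> t) (\<pi> s)) =
     (\<Sum>b\<in>S. \<Sum>q\<in>{p. p permutes S'}. h ((?\<tau> b \<circ> q) t) ((?\<tau> b \<circ> q) s))"
    using sum_over_permutations_insert[OF S'(3,2), of "\<lambda>\<pi>. h (\<pi> t) (\<pi> s)"] S'(1) by simp
  also have "\<dots> = (\<Sum>b\<in>S. \<Sum>q\<in>{p. p permutes S'}. h b (?\<tau> b (q s)))"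
    using S'(2) by (intro sum.cong refl) (simp add: permutes_not_in)
  also have "\<dots> = (\<Sum>b\<in>S. fact (card S' - 1) * (\<Sum>c\<in>S'. h b (?\<tau> b c)))"
    by (rule sum.cong[OF refl], rule sum_permutes_apply[OF S'(3,4)])
  also have "\<dots> = (\<Sum>b\<in>S. fact (card S' - 1) * (\<Sum>c\<in>S - {b}. h b c))"
  proof (rule sum.cong[OF refl])
    fix b assume "b \<in> S"
    have "(\<Sum>c\<in>S'. h b (?\<tau> b c)) = (\<Sum>c\<in>?\<tau> b ` S'. h b c)"
      by (simp add: sum.reindex)
    also have "?\<tau> b ` S' = S - {b}"
      unfolding S'_def using assms(2) \<open>b \<in> S\<close> by (rule transpose_image_Diff_singleton)
    finally show "fact (card S' - 1) * (\<Sum>c\<in>S'. h b (?\<tau> b c))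
        = fact (card S' - 1) * (\<Sum>c\<in>S - {b}. h b c)" by simp
  qed
  also have "card S' - 1 = card S - 2" using assms by (simp add: S'_def)
  finally show ?thesis by (simp add: sum_distrib_left)
qed

lemma power2_norm_sum_eq_sum_inner:
  fixes v :: "nat \<Rightarrow> 'a::real_inner"
  shows "(norm (\<Sum>t<j. v t))\<^sup>2 = (\<Sum>t<j. \<Sum>s<j. inner (v t) (v s))"
  by (simp add: power2_norm_eq_inner inner_sum_left inner_sum_right) (rule sum.swap)

text \<open>Expanding the square, diagonal terms see one value of \<open>\<pi>\<close> and off-diagonal terms an
  ordered pair of distinct values.\<close>

lemma sum_permutes_power2_norm_prefix_sum:
  fixes a :: "nat \<Rightarrow> 'a::real_inner"
  assumes "j \<le> n"
  shows "(\<Sum>\<pi>\<in>{\<pi>. \<pi> permutes {..<n}}. (norm (\<Sum>t<j. a (\<pi> t)))\<^sup>2)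
    = fact (n - 1) * real j * (\<Sum>i<n. (norm (a i))\<^sup>2)
      + fact (n - 2) * (real j * (real j - 1))
          * ((norm (\<Sum>i<n. a i))\<^sup>2 - (\<Sum>i<n. (norm (a i))\<^sup>2))"
proof -
  define V where "V = (\<Sum>i<n. (norm (a i))\<^sup>2)"
  define A where "A = (norm (\<Sum>i<n. a i))\<^sup>2"
  define c where "c t s = (if t = s then fact (n - 1) * V else fact (n - 2) * (A - V))" for t s :: nat
  have off_diagonal: "(\<Sum>b<n. \<Sum>k\<in>{..<n} - {b}. inner (a b) (a k)) = A - V"
    unfolding A_def V_def power2_norm_sum_eq_sum_inner
    by (simp add: sum_diff1 sum_subtractf power2_norm_eq_inner)
  have pair: "(\<Sum>\<pi>\<in>{\<pi>. \<pi> permutes {..<n}}. inner (a (\<pi> t)) (a (\<pi> s))) = c t s"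
    if "t < j" "s < j" for t s
  proof (cases "t = s")
    case True
    then show ?thesis using sum_permutes_apply[of "{..<n}" t "\<lambda>b. inner (a b) (a b)"] that assms
      by (simp add: c_def V_def power2_norm_eq_inner)
  next
    case False
    then show ?thesis
      using sum_permutes_apply_pair[of "{..<n}" t s "\<lambda>b k. inner (a b) (a k)"] that assms off_diagonal
      by (simp add: c_def)
  qed
  have row: "(\<Sum>s<j. c t s) = fact (n - 1) * V + (real j - 1) * (fact (n - 2) * (A - V))"
    if "t < j" for t
  proof -
    have "(\<Sum>s<j. c t s) = c t t + (\<Sum>s\<in>{..<j} - {t}. c t s)"
      using that by (simp add: sum.remove)
    then show ?thesis using that by (simp add: c_def of_nat_diff)
  qed
  have "(\<Sum>\<pi>\<in>{\<pi>. \<pi> permutes {..<n}}. (norm (\<Sum>t<j. a (\<pi> t)))\<^sup>2)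
      = (\<Sum>t<j. \<Sum>s<j. \<Sum>\<pi>\<in>{\<pi>. \<pi> permutes {..<n}}. inner (a (\<pi> t)) (a (\<pi> s)))"
    unfolding power2_norm_sum_eq_sum_inner by (subst sum.swap, subst (2) sum.swap) (rule refl)
  also have "\<dots> = (\<Sum>t<j. \<Sum>s<j. c t s)"
    by (intro sum.cong refl pair) auto
  also have "\<dots> = real j * (fact (n - 1) * V + (real j - 1) * (fact (n - 2) * (A - V)))"
    by (simp add: row)
  finally show ?thesis unfolding V_def A_def by (simp add: algebra_simps)
qed

lemma sum_lessThan_of_nat: "(\<Sum>j<n. real j) = real n * (real n - 1) / 2"
  by (induction n) (auto simp: field_simps)

lemma sum_lessThan_of_nat_times_pred:
  "(\<Sum>j<n. real j * (real j - 1)) = real n * (real n - 1) * (real n - 2) / 3"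
  by (induction n) (auto simp: field_simps)

lemma sum_permutes_sum_power2_norm_prefix_sums:
  fixes a :: "nat \<Rightarrow> 'a::real_inner"
  assumes "n \<ge> 2"
  shows "(\<Sum>\<pi>\<in>{\<pi>. \<pi> permutes {..<n}}. \<Sum>j<n. (norm (\<Sum>t<j. a (\<pi> t)))\<^sup>2)
    = fact n * ((real n - 1) / 2 * (\<Sum>i<n. (norm (a i))\<^sup>2)
        + (real n - 2) / 3 * ((norm (\<Sum>i<n. a i))\<^sup>2 - (\<Sum>i<n. (norm (a i))\<^sup>2)))"
proof -
  define V where "V = (\<Sum>i<n. (norm (a i))\<^sup>2)"
  define A where "A = (norm (\<Sum>i<n. a i))\<^sup>2"
  obtain m where m: "n = Suc (Suc m)" using assms by (metis add_2_eq_Suc le_Suc_ex)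
  have fact_pred: "fact (n - 1) = fact n / real n"
    by (simp add: m)
  have "fact n = real n * (real n - 1) * fact (n - 2)"
    by (simp add: m algebra_simps)
  then have fact_pred2: "fact (n - 2) = fact n / (real n * (real n - 1))"
    using assms by (simp add: field_simps)
  have "(\<Sum>\<pi>\<in>{\<pi>. \<pi> permutes {..<n}}. \<Sum>j<n. (norm (\<Sum>t<j. a (\<pi> t)))\<^sup>2)
      = (\<Sum>j<n. \<Sum>\<pi>\<in>{\<pi>. \<pi> permutes {..<n}}. (norm (\<Sum>t<j. a (\<pi> t)))\<^sup>2)"
    by (rule sum.swap)
  also have "\<dots> = (\<Sum>j<n. fact (n - 1) * V * real j + fact (n - 2) * (A - V) * (real j * (real j - 1)))"
    by (intro sum.cong refl) (simp add: sum_permutes_power2_norm_prefix_sum V_def A_def)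
  also have "\<dots> = fact (n - 1) * V * (real n * (real n - 1) / 2)
      + fact (n - 2) * (A - V) * (real n * (real n - 1) * (real n - 2) / 3)"
    by (simp add: sum.distrib sum_distrib_left[symmetric] sum_lessThan_of_nat
        sum_lessThan_of_nat_times_pred)
  also have "\<dots> = fact n * ((real n - 1) / 2 * V + (real n - 2) / 3 * (A - V))"
    using assms unfolding fact_pred fact_pred2 by (simp add: field_simps)
  finally show ?thesis unfolding V_def A_def .
qed

lemma power2_add_le: "(x + y)\<^sup>2 \<le> 2 * x\<^sup>2 + 2 * (y::real)\<^sup>2"
proof -
  have "0 \<le> (x - y)\<^sup>2" by simp
  then show ?thesis unfolding power2_diff power2_sum by linarith
qed

lemma power2_norm_add_le:
  fixes x y :: "'a::real_normed_vector"
  shows "(norm (x + y))\<^sup>2 \<le> 2 * (norm x)\<^sup>2 + 2 * (norm y)\<^sup>2"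
proof -
  have "(norm (x + y))\<^sup>2 \<le> (norm x + norm y)\<^sup>2"
    by (simp add: power_mono norm_triangle_ineq)
  also have "\<dots> \<le> 2 * (norm x)\<^sup>2 + 2 * (norm y)\<^sup>2" by (rule power2_add_le)
  finally show ?thesis .
qed

lemma power2_norm_sum_le:
  fixes d :: "'i \<Rightarrow> 'a::real_normed_vector"
  shows "(norm (sum d T))\<^sup>2 \<le> real (card T) * (\<Sum>t\<in>T. (norm (d t))\<^sup>2)"
proof -
  have "(norm (sum d T))\<^sup>2 \<le> (\<Sum>t\<in>T. norm (d t))\<^sup>2"
    by (simp add: power_mono norm_sum)
  also have "\<dots> \<le> (\<Sum>t\<in>T. (norm (d t))\<^sup>2) * card T"
    by (rule sum_squared_le_sum_of_squares)
  finally show ?thesis by (simp add: mult.commute)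
qed

lemma sum_power2_norm_le_lipschitz:
  fixes F :: "'i \<Rightarrow> 'a::real_normed_vector \<Rightarrow> 'a"
  assumes "\<And>i. i \<in> I \<Longrightarrow> (Lf i)-lipschitz_on UNIV (F i)"
  shows "(\<Sum>i\<in>I. (norm (F i x))\<^sup>2)
    \<le> 2 * (\<Sum>i\<in>I. (Lf i)\<^sup>2) * (norm (x - y))\<^sup>2 + 2 * (\<Sum>i\<in>I. (norm (F i y))\<^sup>2)"
proof -
  have "(norm (F i x))\<^sup>2 \<le> 2 * ((Lf i)\<^sup>2 * (norm (x - y))\<^sup>2) + 2 * (norm (F i y))\<^sup>2"
    if "i \<in> I" for i
  proof -
    have "norm (F i x - F i y) \<le> Lf i * norm (x - y)"
      using assms[OF that] by (rule lipschitz_on_normD) auto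
    moreover have "0 \<le> norm (F i x - F i y)" by simp
    ultimately have "(norm (F i x - F i y))\<^sup>2 \<le> (Lf i)\<^sup>2 * (norm (x - y))\<^sup>2"
      by (metis power_mono power_mult_distrib)
    then show ?thesis
      using power2_norm_add_le[of "F i x - F i y" "F i y"] by simp
  qed
  then have "(\<Sum>i\<in>I. (norm (F i x))\<^sup>2)
      \<le> (\<Sum>i\<in>I. 2 * ((Lf i)\<^sup>2 * (norm (x - y))\<^sup>2) + 2 * (norm (F i y))\<^sup>2)"
    by (rule sum_mono)
  then show ?thesis
    by (simp add: sum.distrib sum_distrib_left sum_distrib_right mult.assoc)
qed

lemma seg_iter_diff_start:
  "seg_iter F \<gamma>1 \<gamma>2 \<pi> z0 j - z0 =
    - \<gamma>1 *\<^sub>R (\<Sum>t<j. F (\<pi> t) (seg_iter F \<gamma>1 \<gamma>2 \<pi> z0 t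
                          - \<gamma>2 *\<^sub>R F (\<pi> t) (seg_iter F \<gamma>1 \<gamma>2 \<pi> z0 t)))"
  by (induction j) (auto simp: seg_step_def algebra_simps)

lemma seg_iter_diff_start_power2_le:
  fixes F :: "nat \<Rightarrow> 'a::real_normed_vector \<Rightarrow> 'a" and \<gamma>1 \<gamma>2 :: real
    and \<pi> :: "nat \<Rightarrow> nat" and z0 :: 'a
  defines "z \<equiv> seg_iter F \<gamma>1 \<gamma>2 \<pi> z0"
  shows "(norm (z j - z0))\<^sup>2 \<le> 2 * \<gamma>1\<^sup>2 * (norm (\<Sum>t<j. F (\<pi> t) z0))\<^sup>2
    + 2 * \<gamma>1\<^sup>2 * real j
        * (\<Sum>t<j. (norm (F (\<pi> t) (z t - \<gamma>2 *\<^sub>R F (\<pi> t) (z t)) - F (\<pi> t) z0))\<^sup>2)"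
proof -
  define d where "d t = F (\<pi> t) (z t - \<gamma>2 *\<^sub>R F (\<pi> t) (z t)) - F (\<pi> t) z0" for t
  have "z j - z0 = - \<gamma>1 *\<^sub>R ((\<Sum>t<j. F (\<pi> t) z0) + (\<Sum>t<j. d t))"
    unfolding z_def d_def seg_iter_diff_start by (simp add: sum.distrib[symmetric])
  then have "(norm (z j - z0))\<^sup>2 = \<gamma>1\<^sup>2 * (norm ((\<Sum>t<j. F (\<pi> t) z0) + (\<Sum>t<j. d t)))\<^sup>2"
    by (simp add: power_mult_distrib)
  also have "\<dots> \<le> \<gamma>1\<^sup>2 * (2 * (norm (\<Sum>t<j. F (\<pi> t) z0))\<^sup>2 + 2 * (norm (\<Sum>t<j. d t))\<^sup>2)"
    by (intro mult_left_mono power2_norm_add_le) simp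
  also have "\<dots> \<le> \<gamma>1\<^sup>2 * (2 * (norm (\<Sum>t<j. F (\<pi> t) z0))\<^sup>2 + 2 * (real j * (\<Sum>t<j. (norm (d t))\<^sup>2)))"
    using power2_norm_sum_le[of d "{..<j}"] by (intro mult_left_mono add_left_mono) auto
  finally show ?thesis by (simp add: d_def algebra_simps)
qed

lemma extragradient_deviation_power2_le:
  fixes f :: "'a::real_normed_vector \<Rightarrow> 'a"
  assumes Lip: "M-lipschitz_on UNIV f" and "\<gamma> \<ge> 0" and small: "(\<gamma> * M)\<^sup>2 \<le> 1 / 2"
  shows "(norm (f (z - \<gamma> *\<^sub>R f z) - f z0))\<^sup>2
    \<le> 6 * M\<^sup>2 * (norm (z - z0))\<^sup>2 + 2 * M\<^sup>2 * \<gamma>\<^sup>2 * (norm (f z0))\<^sup>2"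
proof -
  define e where "e = norm (z - z0)"
  have "M \<ge> 0" using Lip by (rule lipschitz_on_nonneg)
  have f_diff: "norm (f x - f z0) \<le> M * norm (x - z0)" for x
    using Lip by (rule lipschitz_on_normD) auto
  have split: "z - \<gamma> *\<^sub>R f z - z0 = (z - z0) - \<gamma> *\<^sub>R (f z - f z0) - \<gamma> *\<^sub>R f z0"
    by (simp add: algebra_simps)
  have "norm (z - \<gamma> *\<^sub>R f z - z0) \<le> e + \<gamma> * norm (f z - f z0) + \<gamma> * norm (f z0)"
    unfolding split using norm_triangle_ineq4[of "(z - z0) - \<gamma> *\<^sub>R (f z - f z0)" "\<gamma> *\<^sub>R f z0"]
      norm_triangle_ineq4[of "z - z0" "\<gamma> *\<^sub>R (f z - f z0)"] \<open>\<gamma> \<ge> 0\<close>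
    by (simp add: e_def)
  also have "\<dots> \<le> (1 + \<gamma> * M) * e + \<gamma> * norm (f z0)"
    using mult_left_mono[OF f_diff[of z] \<open>\<gamma> \<ge> 0\<close>] by (simp add: e_def algebra_simps)
  finally have "norm (f (z - \<gamma> *\<^sub>R f z) - f z0) \<le> M * ((1 + \<gamma> * M) * e + \<gamma> * norm (f z0))"
    using f_diff[of "z - \<gamma> *\<^sub>R f z"] mult_left_mono[OF _ \<open>M \<ge> 0\<close>] by (meson order_trans)
  then have "(norm (f (z - \<gamma> *\<^sub>R f z) - f z0))\<^sup>2 \<le> M\<^sup>2 * ((1 + \<gamma> * M) * e + \<gamma> * norm (f z0))\<^sup>2"
    by (metis norm_ge_zero power_mono power_mult_distrib)
  also have "\<dots> \<le> M\<^sup>2 * (2 * (1 + \<gamma> * M)\<^sup>2 * e\<^sup>2 + 2 * \<gamma>\<^sup>2 * (norm (f z0))\<^sup>2)"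
    using power2_add_le[of "(1 + \<gamma> * M) * e" "\<gamma> * norm (f z0)"]
    by (intro mult_left_mono) (simp_all add: power_mult_distrib)
  also have "\<dots> \<le> M\<^sup>2 * (2 * 3 * e\<^sup>2 + 2 * \<gamma>\<^sup>2 * (norm (f z0))\<^sup>2)"
  proof -
    have "(1 + \<gamma> * M)\<^sup>2 \<le> 3"
      using power2_add_le[of 1 "\<gamma> * M"] small by simp
    then show ?thesis by (intro mult_left_mono add_right_mono mult_right_mono) auto
  qed
  finally show ?thesis by (simp add: e_def algebra_simps)
qed

lemma seg_epoch_sum_power2_dist_le:
  fixes F :: "nat \<Rightarrow> 'a::real_normed_vector \<Rightarrow> 'a"
  assumes perm: "\<pi> permutes {..<n}" and "n \<ge> 2"
    and Lip: "\<And>i. i < n \<Longrightarrow> M-lipschitz_on UNIV (F i)" and "\<gamma>2 \<ge> 0"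
    and small1: "\<gamma>1\<^sup>2 * M\<^sup>2 * (real n * (real n - 1)) \<le> 1 / 18"
    and small2: "\<gamma>2\<^sup>2 * M\<^sup>2 * (real n * (real n - 1)) \<le> 1"
  shows "(\<Sum>j<n. (norm (seg_iter F \<gamma>1 \<gamma>2 \<pi> z0 j - z0))\<^sup>2)
    \<le> 3 * \<gamma>1\<^sup>2 * (\<Sum>j<n. (norm (\<Sum>t<j. F (\<pi> t) z0))\<^sup>2) + 3 * \<gamma>1\<^sup>2 * (\<Sum>i<n. (norm (F i z0))\<^sup>2)"
proof -
  define z where "z = seg_iter F \<gamma>1 \<gamma>2 \<pi> z0"
  define S where "S = (\<Sum>t<n. (norm (z t - z0))\<^sup>2)"
  define P where "P = (\<Sum>j<n. (norm (\<Sum>t<j. F (\<pi> t) z0))\<^sup>2)"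
  define V where "V = (\<Sum>i<n. (norm (F i z0))\<^sup>2)"
  define D where "D = 6 * M\<^sup>2 * S + 2 * M\<^sup>2 * \<gamma>2\<^sup>2 * V"
  have "2 \<le> real n * (real n - 1)"
    using mult_mono[of 2 "real n" 1 "real n - 1"] \<open>n \<ge> 2\<close> by simp
  then have "(\<gamma>2 * M)\<^sup>2 * 2 \<le> 1"
    using small2 mult_left_mono[of 2 "real n * (real n - 1)" "(\<gamma>2 * M)\<^sup>2"]
    by (simp add: power_mult_distrib)
  then have deviation: "(norm (F (\<pi> t) (z t - \<gamma>2 *\<^sub>R F (\<pi> t) (z t)) - F (\<pi> t) z0))\<^sup>2
      \<le> 6 * M\<^sup>2 * (norm (z t - z0))\<^sup>2 + 2 * M\<^sup>2 * \<gamma>2\<^sup>2 * (norm (F (\<pi> t) z0))\<^sup>2" if "t < n" for t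
    using extragradient_deviation_power2_le[OF Lip \<open>\<gamma>2 \<ge> 0\<close>] permutes_in_image[OF perm, of t] that
    by simp
  have errors: "(\<Sum>t<j. (norm (F (\<pi> t) (z t - \<gamma>2 *\<^sub>R F (\<pi> t) (z t)) - F (\<pi> t) z0))\<^sup>2) \<le> D"
    if "j \<le> n" for j
  proof -
    have "(\<Sum>t<j. (norm (F (\<pi> t) (z t - \<gamma>2 *\<^sub>R F (\<pi> t) (z t)) - F (\<pi> t) z0))\<^sup>2)
        \<le> (\<Sum>t<n. 6 * M\<^sup>2 * (norm (z t - z0))\<^sup>2 + 2 * M\<^sup>2 * \<gamma>2\<^sup>2 * (norm (F (\<pi> t) z0))\<^sup>2)"
      using that by (intro order_trans[OF sum_mono sum_mono2] deviation) auto
    also have "(\<Sum>t<n. (norm (F (\<pi> t) z0))\<^sup>2) = V"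
      unfolding V_def using sum.permute[OF perm, of "\<lambda>i. (norm (F i z0))\<^sup>2"] by (simp add: comp_def)
    then have "(\<Sum>t<n. 6 * M\<^sup>2 * (norm (z t - z0))\<^sup>2 + 2 * M\<^sup>2 * \<gamma>2\<^sup>2 * (norm (F (\<pi> t) z0))\<^sup>2) = D"
      by (simp add: D_def S_def sum.distrib sum_distrib_left[symmetric])
    finally show ?thesis .
  qed
  have "S \<le> (\<Sum>j<n. 2 * \<gamma>1\<^sup>2 * (norm (\<Sum>t<j. F (\<pi> t) z0))\<^sup>2 + 2 * \<gamma>1\<^sup>2 * real j * D)"
    unfolding S_def z_def
    by (intro sum_mono order_trans[OF seg_iter_diff_start_power2_le] add_left_mono mult_left_mono
        errors[unfolded z_def]) auto
  also have "\<dots> = 2 * \<gamma>1\<^sup>2 * P + 6 * (\<gamma>1\<^sup>2 * M\<^sup>2 * (real n * (real n - 1))) * S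
      + 2 * \<gamma>1\<^sup>2 * (\<gamma>2\<^sup>2 * M\<^sup>2 * (real n * (real n - 1))) * V"
    by (simp add: P_def D_def sum.distrib sum_distrib_left[symmetric] sum_distrib_right[symmetric]
        sum_lessThan_of_nat field_simps)
  also have "\<dots> \<le> 2 * \<gamma>1\<^sup>2 * P + 6 * (1 / 18) * S + 2 * \<gamma>1\<^sup>2 * 1 * V"
    using small1 small2 by (intro add_mono mult_left_mono mult_right_mono order_refl)
      (auto simp: S_def V_def sum_nonneg)
  finally show ?thesis unfolding S_def P_def V_def z_def by linarith
qed

lemma seg_rr_mean_power2_dist_le:
  fixes F :: "nat \<Rightarrow> 'a::real_inner \<Rightarrow> 'a"
  assumes "n \<ge> 2"
    and Lip: "\<And>i. i < n \<Longrightarrow> M-lipschitz_on UNIV (F i)" and "\<gamma>2 \<ge> 0"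
    and small1: "\<gamma>1\<^sup>2 * M\<^sup>2 * (real n * (real n - 1)) \<le> 1 / 18"
    and small2: "\<gamma>2\<^sup>2 * M\<^sup>2 * (real n * (real n - 1)) \<le> 1"
  shows "(\<Sum>\<pi>\<in>{\<pi>. \<pi> permutes {..<n}}.
            (1 / real n) * (\<Sum>j<n. (norm (seg_iter F \<gamma>1 \<gamma>2 \<pi> z0 j - z0))\<^sup>2))
          / real (card {\<pi>. \<pi> permutes {..<n}})
    \<le> \<gamma>1\<^sup>2 / real n * ((real n + 7) / 2 * (\<Sum>i<n. (norm (F i z0))\<^sup>2)
                        + (real n - 2) * (norm (\<Sum>i<n. F i z0))\<^sup>2)"
proof -
  define V where "V = (\<Sum>i<n. (norm (F i z0))\<^sup>2)"
  define A where "A = (norm (\<Sum>i<n. F i z0))\<^sup>2"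
  define P where "P \<pi> = (\<Sum>j<n. (norm (\<Sum>t<j. F (\<pi> t) z0))\<^sup>2)" for \<pi>
  have card: "card {\<pi>. \<pi> permutes {..<n}} = fact n"
    by (simp add: card_permutations)
  have sum_P: "(\<Sum>\<pi>\<in>{\<pi>. \<pi> permutes {..<n}}. P \<pi>)
      = fact n * ((real n - 1) / 2 * V + (real n - 2) / 3 * (A - V))"
    unfolding P_def V_def A_def by (rule sum_permutes_sum_power2_norm_prefix_sums[OF \<open>n \<ge> 2\<close>])
  have "(\<Sum>\<pi>\<in>{\<pi>. \<pi> permutes {..<n}}.
            (1 / real n) * (\<Sum>j<n. (norm (seg_iter F \<gamma>1 \<gamma>2 \<pi> z0 j - z0))\<^sup>2))
      \<le> (\<Sum>\<pi>\<in>{\<pi>. \<pi> permutes {..<n}}. (1 / real n) * (3 * \<gamma>1\<^sup>2 * P \<pi> + 3 * \<gamma>1\<^sup>2 * V))"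
    unfolding P_def V_def
    by (intro sum_mono mult_left_mono seg_epoch_sum_power2_dist_le[OF _ assms]) auto
  also have "\<dots> = (1 / real n) * (3 * \<gamma>1\<^sup>2 * (\<Sum>\<pi>\<in>{\<pi>. \<pi> permutes {..<n}}. P \<pi>)
      + fact n * (3 * \<gamma>1\<^sup>2 * V))"
    unfolding sum_distrib_left[symmetric] sum.distrib sum_constant card by simp
  also have "\<dots> = fact n * (\<gamma>1\<^sup>2 / real n * ((real n + 7) / 2 * V + (real n - 2) * A))"
    unfolding sum_P using \<open>n \<ge> 2\<close> by (simp add: field_simps)
  finally show ?thesis
    unfolding card V_def A_def by (simp add: divide_le_eq mult.commute)
qed

lemma norm_sum_le_of_lipschitz_mean:
  fixes F :: "nat \<Rightarrow> 'a::real_normed_vector \<Rightarrow> 'a"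
  assumes "n > 0" and Lip: "L-lipschitz_on UNIV (\<lambda>z. (1 / real n) *\<^sub>R (\<Sum>i<n. F i z))"
    and root: "(1 / real n) *\<^sub>R (\<Sum>i<n. F i zs) = 0"
  shows "norm (\<Sum>i<n. F i z) \<le> real n * L * norm (z - zs)"
proof -
  have "norm ((1 / real n) *\<^sub>R (\<Sum>i<n. F i z)) \<le> L * norm (z - zs)"
    using lipschitz_on_normD[OF Lip, of z zs] root by simp
  then show ?thesis using \<open>n > 0\<close> by (simp add: field_simps)
qed

lemma seg_rr_step_sizes_squared:
  assumes "n \<ge> 2" "M \<ge> 0" "\<gamma>1 \<ge> 0" "\<gamma>2 \<ge> 0"
    and "\<gamma>1 * (3 * sqrt (2 * real n * (real n - 1)) * M) \<le> 1"
    and "\<gamma>2 * (sqrt (real n * (real n - 1)) * M) \<le> 1"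
  shows "\<gamma>1\<^sup>2 * M\<^sup>2 * (real n * (real n - 1)) \<le> 1 / 18"
    and "\<gamma>2\<^sup>2 * M\<^sup>2 * (real n * (real n - 1)) \<le> 1"
proof -
  have "(\<gamma>1 * (3 * sqrt (2 * real n * (real n - 1)) * M))\<^sup>2 \<le> 1"
    using assms by (intro power_le_one) auto
  then show "\<gamma>1\<^sup>2 * M\<^sup>2 * (real n * (real n - 1)) \<le> 1 / 18"
    using assms(1) by (simp add: power_mult_distrib algebra_simps)
  have "(\<gamma>2 * (sqrt (real n * (real n - 1)) * M))\<^sup>2 \<le> 1"
    using assms by (intro power_le_one) auto
  then show "\<gamma>2\<^sup>2 * M\<^sup>2 * (real n * (real n - 1)) \<le> 1"
    using assms(1) by (simp add: power_mult_distrib algebra_simps)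
qed

theorem lemma2:
  fixes F :: "nat \<Rightarrow> 'a::euclidean_space \<Rightarrow> 'a"
    and Lf :: "nat \<Rightarrow> real" and L \<gamma>1 \<gamma>2 :: real and n :: nat and zs z0 :: 'a
  assumes n2: "n \<ge> 2"
    and LipF: "\<And>i. i < n \<Longrightarrow> (Lf i)-lipschitz_on UNIV (F i)"
    and LipMean: "L-lipschitz_on UNIV (\<lambda>z. (1 / real n) *\<^sub>R (\<Sum>i<n. F i z))"
    and root: "(1 / real n) *\<^sub>R (\<Sum>i<n. F i zs) = 0"
    and g1pos: "\<gamma>1 > 0" and g2pos: "\<gamma>2 > 0"
    and g1: "\<gamma>1 * (3 * sqrt (2 * real n * (real n - 1)) * Max (Lf ` {..<n})) \<le> 1"
    and g2: "\<gamma>2 * (sqrt (real n * (real n - 1)) * Max (Lf ` {..<n})) \<le> 1"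
  shows "(\<Sum>\<pi>\<in>{\<pi>. \<pi> permutes {..<n}}.
            (1 / real n) * (\<Sum>j<n. (norm (seg_iter F \<gamma>1 \<gamma>2 \<pi> z0 j - z0))\<^sup>2))
          / real (card {\<pi>. \<pi> permutes {..<n}})
       \<le> (10 * (real n)\<^sup>2 * L\<^sup>2 + ((2 / real n) * (\<Sum>i<n. (Lf i)\<^sup>2)) * (25 + real n))
            * \<gamma>1\<^sup>2 * (norm (z0 - zs))\<^sup>2
         + 2 * (real n + 25) * \<gamma>1\<^sup>2 * ((1 / real n) * (\<Sum>i<n. (norm (F i zs))\<^sup>2))"
proof -
  define M where "M = Max (Lf ` {..<n})"
  define r where "r = norm (z0 - zs)"
  define V where "V = (\<Sum>i<n. (norm (F i z0))\<^sup>2)"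
  define A where "A = (norm (\<Sum>i<n. F i z0))\<^sup>2"
  have LipM: "M-lipschitz_on UNIV (F i)" if "i < n" for i
    using LipF[OF that] by (rule lipschitz_on_le) (use that in \<open>auto simp: M_def\<close>)
  have "M \<ge> 0" using lipschitz_on_nonneg[OF LipM[of 0]] n2 by simp
  note small = seg_rr_step_sizes_squared[OF n2 \<open>M \<ge> 0\<close> _ _ g1[folded M_def] g2[folded M_def]]
  have "(\<Sum>\<pi>\<in>{\<pi>. \<pi> permutes {..<n}}.
            (1 / real n) * (\<Sum>j<n. (norm (seg_iter F \<gamma>1 \<gamma>2 \<pi> z0 j - z0))\<^sup>2))
          / real (card {\<pi>. \<pi> permutes {..<n}})
      \<le> \<gamma>1\<^sup>2 / real n * ((real n + 7) / 2 * V + (real n - 2) * A)"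
    unfolding V_def A_def using n2 LipM g1pos g2pos small
    by (intro seg_rr_mean_power2_dist_le) auto
  also have "\<dots> \<le> \<gamma>1\<^sup>2 / real n * ((25 + real n) * V + real n * A)"
    using n2 by (intro mult_left_mono add_mono mult_right_mono) (auto simp: V_def A_def sum_nonneg)
  also have "\<dots> \<le> \<gamma>1\<^sup>2 / real n * ((25 + real n) * (2 * (\<Sum>i<n. (Lf i)\<^sup>2) * r\<^sup>2
      + 2 * (\<Sum>i<n. (norm (F i zs))\<^sup>2)) + real n * (real n * L * r)\<^sup>2)"
    unfolding V_def A_def r_def using n2 LipF LipMean root
    by (intro mult_left_mono add_mono sum_power2_norm_le_lipschitz power_mono
        norm_sum_le_of_lipschitz_mean) auto
  \<comment> \<open>The argument yields \<open>n\<^sup>2 L\<^sup>2\<close>; the factor 10 of the stated bound is slack.\<close>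
  also have "\<dots> \<le> (10 * (real n)\<^sup>2 * L\<^sup>2 + ((2 / real n) * (\<Sum>i<n. (Lf i)\<^sup>2)) * (25 + real n))
        * \<gamma>1\<^sup>2 * r\<^sup>2
      + 2 * (real n + 25) * \<gamma>1\<^sup>2 * ((1 / real n) * (\<Sum>i<n. (norm (F i zs))\<^sup>2))"
    using n2 mult_nonneg_nonneg[OF of_nat_0_le_iff zero_le_power2[of "(real n)\<^sup>2 * L * \<gamma>1 * r"]]
    by (simp add: field_simps power2_eq_square)
  finally show ?thesis unfolding r_def .
qed

end
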